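(* Let $r,k,p,q$ be integers, all greater than $1$, with $r\ge k$, $p\ge k+1$ and $2\le q\le\binom{p}{k}$. Then \[ F_k(r,p,q) \le r^{\binom{F_{k-1}(r,p-1,q)}{k-1}}. \] Here, when $q>\binom{p-1}{k-1}$, $F_{k-1}(r,p-1,q)$ is interpreted as $p-1$.
   Context: For positive integers $k,p,q$ with $p\ge k+1$ and $2\le q\le\binom{p}{k}$, and a positive integer $r$, $F_k(r,p,q)$ is the minimum integer $n$ such that every coloring of the edges of the complete $k$-uniform hypergraph $K_n^{(k)}$ with $r$ colors contains a copy of $K_p^{(k)}$ (i.e. a set of $p$ vertices) whose edges receive at most $q-1$ distinct colors. (For $k=1$, $K_n^{(1)}$ has the $n$ singletons as edges, so the coloring is a coloring of vertices.) *)

theory Defs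
  imports Main
begin

text \<open>Vertex set of K_n^(k) is {..<n}; its edges are the k-subsets.\<close>

definition F_good :: "nat \<Rightarrow> nat \<Rightarrow> nat \<Rightarrow> nat \<Rightarrow> nat \<Rightarrow> bool" where
  "F_good k r p q n \<longleftrightarrow>
     (\<forall>c :: nat set \<Rightarrow> nat.
        (\<forall>e. e \<subseteq> {..<n} \<and> card e = k \<longrightarrow> c e < r) \<longrightarrow>
        (\<exists>S. S \<subseteq> {..<n} \<and> card S = p \<and>
             card (c ` {e. e \<subseteq> S \<and> card e = k}) \<le> q - 1))"

definition F :: "nat \<Rightarrow> nat \<Rightarrow> nat \<Rightarrow> nat \<Rightarrow> nat" where
  "F k r p q = (LEAST n. F_good k r p q n)"

end

theory Submission
  imports Defs "HOL-Library.FuncSet" "HOL-Library.Ramsey"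
begin

text \<open>This is the Erd\<odieresis>s--Rado stepping-up argument. Let \<open>m\<close> be the bound for \<open>k - 1\<close> and colour
  the \<open>k\<close>-sets of \<open>N = r ^ (m choose (k - 1))\<close> vertices. Greedily build an end-homogeneous set \<open>T\<close>
  of \<open>m\<close> vertices: the colour of \<open>X \<union> {y}\<close>, for a \<open>(k - 1)\<close>-set \<open>X \<subseteq> T\<close> and a vertex \<open>y\<close> above
  \<open>X\<close>, depends only on \<open>X\<close>. Adding the \<open>i\<close>-th vertex splits the remaining candidates into at most
  \<open>r ^ (i choose (k - 2))\<close> classes, and these exponents add up to \<open>m choose (k - 1)\<close>, so a
  candidate \<open>a\<close> survives. Colour each \<open>(k - 1)\<close>-set \<open>X \<subseteq> T\<close> by the colour of \<open>X \<union> {a}\<close> and take a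
  \<open>(p - 1)\<close>-set \<open>S \<subseteq> T\<close> with at most \<open>q - 1\<close> colours; by end-homogeneity the \<open>k\<close>-sets of
  \<open>S \<union> {a}\<close> use only these colours.\<close>

lemma F_good_imp_le:
  assumes "F_good j r p q m" "r \<ge> 1"
  shows "p \<le> m"
proof -
  obtain S where "S \<subseteq> {..<m}" "card S = p"
    using assms unfolding F_good_def by (elim allE[of _ "\<lambda>_. 0"]) auto
  then show ?thesis by (metis card_lessThan card_mono finite_lessThan)
qed

lemma F_good_exists:
  assumes "j \<ge> 1" "q \<ge> 2"
  shows "\<exists>n. F_good j r p q n"
proof -
  obtain N :: nat where N: "partn_lst {..<N} (replicate r p) j"
    using ramsey_full by blast
  have "F_good j r p q N"
    unfolding F_good_def
  proof (intro allI impI)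
    fix c :: "nat set \<Rightarrow> nat"
    assume "\<forall>e. e \<subseteq> {..<N} \<and> card e = j \<longrightarrow> c e < r"
    then have "c \<in> nsets {..<N} j \<rightarrow> {..<length (replicate r p)}"
      by (auto simp: nsets_def)
    then obtain i where "i < r" "monochromatic {..<N} p j c i"
      using N unfolding partn_lst_def by auto
    then obtain H where H: "H \<in> nsets {..<N} p" "c ` nsets H j \<subseteq> {i}"
      unfolding monochromatic_def by auto
    have "{e. e \<subseteq> H \<and> card e = j} = nsets H j"
      using assms(1) by (auto simp: nsets_def intro: card_ge_0_finite)
    then have "card (c ` {e. e \<subseteq> H \<and> card e = j}) \<le> card {i}"
      using H(2) by (intro card_mono) auto
    then show "\<exists>S. S \<subseteq> {..<N} \<and> card S = p \<and> card (c ` {e. e \<subseteq> S \<and> card e = j}) \<le> q - 1"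
      using H(1) assms(2) by (auto simp: nsets_def)
  qed
  then show ?thesis ..
qed

lemma F_good_F:
  assumes "j \<ge> 1" "q \<ge> 2"
  shows "F_good j r p q (F j r p q)"
  unfolding F_def using F_good_exists[OF assms] by (rule LeastI_ex)

lemma F_good_few_edges:
  assumes "n choose j < q"
  shows "F_good j r n q n"
  unfolding F_good_def
proof (intro allI impI)
  fix c :: "nat set \<Rightarrow> nat"
  have "card (c ` {e. e \<subseteq> {..<n} \<and> card e = j}) \<le> card {e. e \<subseteq> {..<n} \<and> card e = j}"
    by (rule card_image_le) simp
  also have "\<dots> = n choose j"
    using n_subsets[of "{..<n}" j] by simp
  finally show "\<exists>S. S \<subseteq> {..<n} \<and> card S = n \<and> card (c ` {e. e \<subseteq> S \<and> card e = j}) \<le> q - 1"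
    using assms by (intro exI[of _ "{..<n}"]) auto
qed

lemma F_good_on_finite_set:
  assumes good: "F_good j r p q m" and T: "finite T" "card T = m"
    and col: "\<forall>X. X \<subseteq> T \<and> card X = j \<longrightarrow> d X < r"
  shows "\<exists>S\<subseteq>T. card S = p \<and> card (d ` {X. X \<subseteq> S \<and> card X = j}) \<le> q - 1"
proof -
  obtain g where g: "bij_betw g {..<m} T"
    using ex_bij_betw_nat_finite[OF T(1)] T(2) by (auto simp: atLeast0LessThan)
  then have inj: "inj_on g {..<m}" and img: "g ` {..<m} = T"
    by (auto simp: bij_betw_def)
  have "\<forall>Y. Y \<subseteq> {..<m} \<and> card Y = j \<longrightarrow> d (g ` Y) < r"
  proof (intro allI impI)
    fix Y assume Y: "Y \<subseteq> {..<m} \<and> card Y = j"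
    then have "card (g ` Y) = j"
      using inj by (simp add: card_image inj_on_subset)
    moreover have "g ` Y \<subseteq> T"
      using Y img by auto
    ultimately show "d (g ` Y) < r"
      using col by blast
  qed
  then obtain S0 where S0: "S0 \<subseteq> {..<m}" "card S0 = p"
      "card ((\<lambda>Y. d (g ` Y)) ` {Y. Y \<subseteq> S0 \<and> card Y = j}) \<le> q - 1"
    using good[unfolded F_good_def, THEN spec, of "\<lambda>Y. d (g ` Y)"] by blast
  have inj0: "inj_on g S0"
    using inj S0(1) by (rule inj_on_subset)
  have "d ` {X. X \<subseteq> g ` S0 \<and> card X = j} \<subseteq> (\<lambda>Y. d (g ` Y)) ` {Y. Y \<subseteq> S0 \<and> card Y = j}"
  proof
    fix z assume "z \<in> d ` {X. X \<subseteq> g ` S0 \<and> card X = j}"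
    then obtain X where X: "X \<subseteq> g ` S0" "card X = j" "z = d X"
      by auto
    define Y where "Y = S0 \<inter> g -` X"
    have "g ` Y = X" "Y \<subseteq> S0"
      using X(1) by (auto simp: Y_def)
    moreover have "card Y = j"
      using X(2) \<open>g ` Y = X\<close> \<open>Y \<subseteq> S0\<close> inj0 by (metis card_image inj_on_subset)
    ultimately show "z \<in> (\<lambda>Y. d (g ` Y)) ` {Y. Y \<subseteq> S0 \<and> card Y = j}"
      using X(3) by auto
  qed
  moreover have "finite {Y. Y \<subseteq> S0 \<and> card Y = j}"
    using finite_subset[OF S0(1)] by simp
  ultimately have "card (d ` {X. X \<subseteq> g ` S0 \<and> card X = j}) \<le> q - 1"
    using S0(3) by (meson card_mono finite_imageI le_trans)
  moreover have "g ` S0 \<subseteq> T" "card (g ` S0) = p"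
    using S0 img inj0 by (auto simp: card_image)
  ultimately show ?thesis by blast
qed

lemma le_of_mult_diff_le_mult:
  fixes a b n x :: nat
  assumes "n < b" "a * b - n \<le> b * x"
  shows "a \<le> x"
proof (rule ccontr)
  assume "\<not> a \<le> x"
  then have "b * (x + 1) \<le> b * a"
    by (intro mult_le_mono2) simp
  then show False
    using assms by (simp add: algebra_simps)
qed

text \<open>A lower bound for the number of candidates left after \<open>i\<close> extension steps of an
  end-homogeneous set: each of the first \<open>j\<close> steps uses up one vertex, and from then on
  step \<open>i\<close> divides by \<open>r ^ (i choose (j - 1))\<close>; by Pascal's rule these exponents add up to
  \<open>i choose j\<close>.\<close>

definition candidates_bound :: "nat \<Rightarrow> nat \<Rightarrow> nat \<Rightarrow> nat \<Rightarrow> nat" where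
  "candidates_bound r j m i =
     (if i < j then r ^ (m choose j) - i else r ^ ((m choose j) - (i choose j)))"

lemma candidates_bound_pos:
  assumes "j \<ge> 1" "r > j" "m \<ge> j" "i \<le> m"
  shows "candidates_bound r j m i \<ge> 1"
proof -
  have "r ^ 1 \<le> r ^ (m choose j)"
    using assms by (intro power_increasing) (auto simp: Suc_leI)
  then show ?thesis
    using assms by (auto simp: candidates_bound_def)
qed

lemma candidates_bound_Suc:
  assumes j: "j \<ge> 1" "r > j" and "i < m"
    and step: "candidates_bound r j m i - 1 \<le> r ^ (i choose (j - 1)) * x"
  shows "candidates_bound r j m (Suc i) \<le> x"
proof -
  define E where "E = m choose j"
  consider "Suc i < j" | "Suc i = j" | "j \<le> i"
    by linarith
  then show ?thesis
  proof cases
    case 1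
    then have "i choose (j - 1) = 0"
      by simp
    then show ?thesis
      using step 1 by (simp only: power_0 mult_1) (simp add: candidates_bound_def)
  next
    case 2
    have "E \<ge> 1"
      using 2 \<open>i < m\<close> by (simp add: E_def Suc_leI)
    then have "r ^ (E - 1) * r = r ^ E"
      by (metis Suc_diff_1 less_le_trans zero_less_one power_Suc2)
    moreover have "i choose (j - 1) = 1"
      using 2 by (metis diff_Suc_1 binomial_n_n)
    ultimately have "r ^ (E - 1) * r - j \<le> r * x"
      using step 2 by (simp only: power_one_right) (simp add: candidates_bound_def E_def)
    then have "r ^ (E - 1) \<le> x"
      by (rule le_of_mult_diff_le_mult[OF j(2)])
    then show ?thesis
      using 2 by (simp add: candidates_bound_def E_def)
  next
    case 3
    define e where "e = i choose (j - 1)"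
    define D where "D = E - (Suc i choose j)"
    have pascal: "Suc i choose j = (i choose j) + e"
      using j by (cases j) (simp_all add: e_def)
    have "Suc i choose j \<le> E"
      unfolding E_def using \<open>i < m\<close> by (intro binomial_right_mono) simp
    then have "candidates_bound r j m i = r ^ D * r ^ e"
      using 3 pascal by (simp add: candidates_bound_def E_def D_def power_add[symmetric])
    then have "r ^ D * r ^ e - 1 \<le> r ^ e * x"
      using step by (simp only: e_def)
    moreover have "1 < r ^ e"
      using 3 j by (intro one_less_power) (auto simp: e_def)
    ultimately have "r ^ D \<le> x"
      by (rule le_of_mult_diff_le_mult[rotated])
    then show ?thesis
      using 3 by (simp add: candidates_bound_def E_def D_def)
  qed
qed

definition end_homogeneous :: "(nat set \<Rightarrow> nat) \<Rightarrow> nat \<Rightarrow> nat set \<Rightarrow> nat set \<Rightarrow> bool" where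
  "end_homogeneous c j T A \<longleftrightarrow> finite T \<and> finite A \<and> (\<forall>t\<in>T. \<forall>y\<in>A. t < y) \<and>
     (\<forall>X y y'. X \<subseteq> T \<longrightarrow> card X = j \<longrightarrow> y \<in> T \<union> A \<longrightarrow> y' \<in> T \<union> A \<longrightarrow>
        (\<forall>x\<in>X. x < y) \<longrightarrow> (\<forall>x\<in>X. x < y') \<longrightarrow> c (insert y X) = c (insert y' X))"

lemma end_homogeneousD:
  assumes "end_homogeneous c j T A" "X \<subseteq> T" "card X = j" "y \<in> T \<union> A" "y' \<in> T \<union> A"
    and "\<forall>x\<in>X. x < y" "\<forall>x\<in>X. x < y'"
  shows "c (insert y X) = c (insert y' X)"
  using assms unfolding end_homogeneous_def by blast

lemma end_homogeneous_insert:
  assumes eh: "end_homogeneous c j T A" and "a \<in> A" and a_min: "\<forall>y\<in>A. a \<le> y"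
    and "A' \<subseteq> A - {a}" and j: "j \<ge> 1"
    and same: "\<And>Y y y'. Y \<subseteq> T \<Longrightarrow> card Y = j - 1 \<Longrightarrow> y \<in> A' \<Longrightarrow> y' \<in> A' \<Longrightarrow>
      c (insert y (insert a Y)) = c (insert y' (insert a Y))"
  shows "end_homogeneous c j (insert a T) A'"
proof -
  have T_below_a: "\<forall>t\<in>T. t < a"
    using eh \<open>a \<in> A\<close> by (auto simp: end_homogeneous_def)
  show ?thesis
    unfolding end_homogeneous_def
  proof (intro conjI allI impI)
    show "finite (insert a T)" "finite A'"
      using eh \<open>A' \<subseteq> A - {a}\<close> by (auto simp: end_homogeneous_def finite_subset)
    show "\<forall>t\<in>insert a T. \<forall>y\<in>A'. t < y"
      using T_below_a a_min \<open>A' \<subseteq> A - {a}\<close> by force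
  next
    fix X y y'
    assume X: "X \<subseteq> insert a T" "card X = j" and y: "y \<in> insert a T \<union> A'" "y' \<in> insert a T \<union> A'"
      and Xy: "\<forall>x\<in>X. x < y" "\<forall>x\<in>X. x < y'"
    show "c (insert y X) = c (insert y' X)"
    proof (cases "a \<in> X")
      case False
      then have "X \<subseteq> T"
        using X by auto
      moreover have "y \<in> T \<union> A" "y' \<in> T \<union> A"
        using y \<open>a \<in> A\<close> \<open>A' \<subseteq> A - {a}\<close> by auto
      ultimately show ?thesis
        using end_homogeneousD[OF eh _ X(2)] Xy by blast
    next
      case True
      then have "y \<in> A'" "y' \<in> A'"
        using y Xy T_below_a by fastforce+
      moreover have "finite X"
        using X j by (metis card.infinite not_one_le_zero)
      then have "X - {a} \<subseteq> T" "card (X - {a}) = j - 1" "X = insert a (X - {a})"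
        using X True by auto
      ultimately show ?thesis
        using same by metis
    qed
  qed
qed

lemma end_homogeneous_extend:
  assumes eh: "end_homogeneous c j T A" and "A \<noteq> {}" and V: "T \<union> A \<subseteq> V"
    and j: "j \<ge> 1" and r: "r \<ge> 1"
    and col: "\<forall>e. e \<subseteq> V \<and> card e = Suc j \<longrightarrow> c e < r"
  shows "\<exists>a A'. a \<in> A - T \<and> A' \<subseteq> A \<and> end_homogeneous c j (insert a T) A' \<and>
           card A - 1 \<le> r ^ (card T choose (j - 1)) * card A'"
proof -
  have fT: "finite T" and fA: "finite A" and below: "\<forall>t\<in>T. \<forall>y\<in>A. t < y"
    using eh unfolding end_homogeneous_def by blast+
  define a where "a = Min A"
  have aA: "a \<in> A" and a_min: "\<forall>y\<in>A. a \<le> y"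
    using fA \<open>A \<noteq> {}\<close> by (simp_all add: a_def)
  have T_below_a: "\<forall>t\<in>T. t < a"
    using below aA by blast
  define Ys where "Ys = {Y. Y \<subseteq> T \<and> card Y = j - 1}"
  define C where "C = Ys \<rightarrow>\<^sub>E {..<r}"
  \<comment> \<open>classify each remaining candidate by the colours it induces on the \<open>j\<close>-sets of \<open>insert a T\<close> containing \<open>a\<close>\<close>
  define \<sigma> where "\<sigma> y = restrict (\<lambda>Y. c (insert y (insert a Y))) Ys" for y
  have \<sigma>: "\<sigma> \<in> A - {a} \<rightarrow> C"
  proof
    fix y assume y: "y \<in> A - {a}"
    have "c (insert y (insert a Y)) < r" if Y: "Y \<in> Ys" for Y
    proof -
      have "finite Y" "Y \<subseteq> T" "card Y = j - 1"
        using Y fT by (auto simp: Ys_def finite_subset)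
      moreover have "y \<notin> insert a Y" "a \<notin> Y"
        using y \<open>Y \<subseteq> T\<close> T_below_a a_min by fastforce+
      ultimately have "card (insert y (insert a Y)) = Suc j"
        using j by simp
      moreover have "insert y (insert a Y) \<subseteq> V"
        using V y aA \<open>Y \<subseteq> T\<close> by auto
      ultimately show ?thesis
        using col by blast
    qed
    then show "\<sigma> y \<in> C"
      by (auto simp: \<sigma>_def C_def)
  qed
  have "finite Ys"
    using fT by (simp add: Ys_def)
  then have "finite C" "C \<noteq> {}" "card C = r ^ (card T choose (j - 1))"
    using r fT by (auto simp: C_def finite_PiE PiE_eq_empty_iff lessThan_empty_iff card_PiE Ys_def n_subsets)
  then obtain v where v: "card (A - {a}) \<le> card (\<sigma> -` {v} \<inter> (A - {a})) * card C"
    using pigeonhole_card[OF \<sigma>] fA by auto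
  define A' where "A' = \<sigma> -` {v} \<inter> (A - {a})"
  have "card A - 1 \<le> r ^ (card T choose (j - 1)) * card A'"
    using v aA fA \<open>card C = _\<close> by (simp add: A'_def mult.commute)
  moreover have "end_homogeneous c j (insert a T) A'"
  proof (rule end_homogeneous_insert[OF eh aA a_min _ j])
    show "A' \<subseteq> A - {a}"
      by (auto simp: A'_def)
    fix Y y y' assume "Y \<subseteq> T" "card Y = j - 1" "y \<in> A'" "y' \<in> A'"
    then have "Y \<in> Ys" "\<sigma> y = \<sigma> y'"
      by (simp_all add: Ys_def A'_def)
    then show "c (insert y (insert a Y)) = c (insert y' (insert a Y))"
      by (metis \<sigma>_def restrict_apply')
  qed
  moreover have "A' \<subseteq> A" "a \<notin> T"
    using T_below_a by (auto simp: A'_def)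
  ultimately show ?thesis
    using aA by blast
qed

lemma end_homogeneous_exists:
  assumes j: "j \<ge> 1" "r > j" "m \<ge> j"
    and col: "\<forall>e. e \<subseteq> {..<r ^ (m choose j)} \<and> card e = Suc j \<longrightarrow> c e < r"
  shows "\<exists>T A. end_homogeneous c j T A \<and> T \<union> A \<subseteq> {..<r ^ (m choose j)} \<and> card T = m \<and> A \<noteq> {}"
proof -
  define V where "V = {..<r ^ (m choose j)}"
  have "\<exists>T A. end_homogeneous c j T A \<and> T \<union> A \<subseteq> V \<and> card T = i \<and>
          candidates_bound r j m i \<le> card A" if "i \<le> m" for i
    using that
  proof (induction i)
    case 0
    have "end_homogeneous c j {} V"
      using j by (simp add: end_homogeneous_def V_def)
    then show ?case
      using j by (fastforce simp: candidates_bound_def V_def)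
  next
    case (Suc i)
    then obtain T A where TA: "end_homogeneous c j T A" "T \<union> A \<subseteq> V" "card T = i"
        "candidates_bound r j m i \<le> card A"
      by auto
    moreover have "A \<noteq> {}"
      using TA(4) candidates_bound_pos[OF j, of i] Suc.prems by auto
    ultimately obtain a A' where a: "a \<in> A - T" "A' \<subseteq> A" "end_homogeneous c j (insert a T) A'"
        "card A - 1 \<le> r ^ (i choose (j - 1)) * card A'"
      using end_homogeneous_extend[of c j T A V r] j col by (auto simp: V_def)
    have "candidates_bound r j m (Suc i) \<le> card A'"
      using candidates_bound_Suc[OF j(1,2)] Suc.prems TA(4) a(4) by (meson Suc_le_lessD diff_le_mono le_trans)
    moreover have "card (insert a T) = Suc i"
      using a(1) TA(1,3) by (simp add: end_homogeneous_def)
    ultimately show ?case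
      using a TA(2) by blast
  qed
  from this[of m] obtain T A where "end_homogeneous c j T A" "T \<union> A \<subseteq> V" "card T = m"
      "candidates_bound r j m m \<le> card A"
    by blast
  moreover have "A \<noteq> {}"
    using \<open>candidates_bound r j m m \<le> card A\<close> candidates_bound_pos[OF j, of m] by auto
  ultimately show ?thesis
    unfolding V_def by blast
qed

lemma end_homogeneous_colours_subset:
  assumes eh: "end_homogeneous c j T A" and "a \<in> A" "S \<subseteq> T"
  shows "c ` {e. e \<subseteq> insert a S \<and> card e = Suc j} \<subseteq> (\<lambda>X. c (insert a X)) ` {X. X \<subseteq> S \<and> card X = j}"
proof
  fix z assume "z \<in> c ` {e. e \<subseteq> insert a S \<and> card e = Suc j}"
  then obtain e where e: "e \<subseteq> insert a S" "card e = Suc j" "z = c e"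
    by auto
  have T_below_a: "\<forall>t\<in>T. t < a"
    using eh \<open>a \<in> A\<close> by (auto simp: end_homogeneous_def)
  \<comment> \<open>end-homogeneity lets us replace the top vertex \<open>b\<close> of \<open>e\<close> by \<open>a\<close>\<close>
  define b where "b = Max e"
  define X where "X = e - {b}"
  have "finite e" "e \<noteq> {}"
    using e(2) card.infinite by fastforce+
  then have b: "b \<in> e"
    by (simp add: b_def)
  then have e_eq: "e = insert b X"
    by (auto simp: X_def)
  have X_below_b: "\<forall>x\<in>X. x < b"
    using \<open>finite e\<close> by (auto simp: b_def X_def order.strict_iff_order)
  have "card X = j"
    using e(2) \<open>finite e\<close> b by (simp add: X_def)
  have "a \<notin> X"
    using X_below_b b e(1) \<open>S \<subseteq> T\<close> T_below_a by fastforce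
  then have "X \<subseteq> S"
    using e(1) by (auto simp: X_def)
  moreover have "b \<in> T \<union> A"
    using b e(1) \<open>S \<subseteq> T\<close> \<open>a \<in> A\<close> by auto
  moreover have "X \<subseteq> T" "\<forall>x\<in>X. x < a"
    using \<open>X \<subseteq> S\<close> \<open>S \<subseteq> T\<close> T_below_a by auto
  ultimately have "c (insert b X) = c (insert a X)"
    using end_homogeneousD[OF eh _ \<open>card X = j\<close>] \<open>a \<in> A\<close> X_below_b by blast
  then have "c e = c (insert a X)"
    unfolding e_eq .
  then show "z \<in> (\<lambda>X. c (insert a X)) ` {X. X \<subseteq> S \<and> card X = j}"
    using e(3) \<open>X \<subseteq> S\<close> \<open>card X = j\<close> by blast
qed

lemma F_good_step_up:
  assumes j: "j \<ge> 1" "r > j" "m \<ge> j" and "p \<ge> 1" and good: "F_good j r (p - 1) q m"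
  shows "F_good (Suc j) r p q (r ^ (m choose j))"
  unfolding F_good_def
proof (intro allI impI)
  fix c :: "nat set \<Rightarrow> nat"
  define N where "N = r ^ (m choose j)"
  assume col0: "\<forall>e. e \<subseteq> {..<r ^ (m choose j)} \<and> card e = Suc j \<longrightarrow> c e < r"
  then have col: "\<forall>e. e \<subseteq> {..<N} \<and> card e = Suc j \<longrightarrow> c e < r"
    by (simp add: N_def)
  obtain T A where TA: "end_homogeneous c j T A" "T \<union> A \<subseteq> {..<N}" "card T = m" "A \<noteq> {}"
    using end_homogeneous_exists[OF j col0] by (auto simp: N_def)
  then obtain a where "a \<in> A"
    by blast
  have fT: "finite T" and T_below_a: "\<forall>t\<in>T. t < a"
    using TA(1) \<open>a \<in> A\<close> by (auto simp: end_homogeneous_def)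
  have "\<forall>X. X \<subseteq> T \<and> card X = j \<longrightarrow> c (insert a X) < r"
  proof (intro allI impI)
    fix X assume X: "X \<subseteq> T \<and> card X = j"
    then have "finite X" "a \<notin> X"
      using fT T_below_a finite_subset by fastforce+
    then show "c (insert a X) < r"
      using col X TA(2) \<open>a \<in> A\<close> by auto
  qed
  from F_good_on_finite_set[OF good fT TA(3) this]
  obtain S where S: "S \<subseteq> T" "card S = p - 1"
      "card ((\<lambda>X. c (insert a X)) ` {X. X \<subseteq> S \<and> card X = j}) \<le> q - 1"
    by blast
  have "finite {X. X \<subseteq> S \<and> card X = j}"
    using finite_subset[OF S(1) fT] by simp
  then have "card (c ` {e. e \<subseteq> insert a S \<and> card e = Suc j}) \<le> q - 1"
    using card_mono[OF finite_imageI end_homogeneous_colours_subset[OF TA(1) \<open>a \<in> A\<close> S(1)]] S(3)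
    by linarith
  moreover have "card (insert a S) = p"
  proof -
    have "finite S" "a \<notin> S"
      using S(1) fT T_below_a finite_subset by auto
    then show ?thesis
      using S(2) \<open>p \<ge> 1\<close> by simp
  qed
  moreover have "insert a S \<subseteq> {..<N}"
    using S(1) TA(2) \<open>a \<in> A\<close> by auto
  ultimately show "\<exists>S. S \<subseteq> {..<r ^ (m choose j)} \<and> card S = p \<and>
      card (c ` {e. e \<subseteq> S \<and> card e = Suc j}) \<le> q - 1"
    unfolding N_def by blast
qed

theorem theorem1p4:
  fixes r k p q :: nat
  assumes "r > 1" "k > 1" "p > 1" "q > 1"
    and "r \<ge> k" "p \<ge> k + 1" "2 \<le> q" "q \<le> p choose k"
  shows "F k r p q \<le>
    r ^ ((if q > (p - 1) choose (k - 1) then p - 1 else F (k - 1) r (p - 1) q) choose (k - 1))"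
proof -
  define j where "j = k - 1"
  define m where "m = (if q > (p - 1) choose j then p - 1 else F j r (p - 1) q)"
  have k: "k = Suc j" "j \<ge> 1" "r > j"
    using assms by (auto simp: j_def)
  have good: "F_good j r (p - 1) q m"
    using F_good_few_edges[of "p - 1" j q r] F_good_F[OF k(2) \<open>2 \<le> q\<close>] by (simp add: m_def)
  then have "m \<ge> j"
    using F_good_imp_le assms(1,6) k(1) by fastforce
  then have "F_good k r p q (r ^ (m choose j))"
    using F_good_step_up[OF k(2,3) _ _ good] assms(3) k(1) by simp
  then show ?thesis
    unfolding F_def m_def j_def by (rule Least_le)
qed

end
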